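(* Let $a<b$ be real numbers and let $d\geq 2$ be an integer. Then there exists an alphabet $\mathcal{A}\subset\mathbb{R}$ with $|\mathcal{A}|=2^d$ such that for every $N$ and every $y\in[a,b]^{N\times N}$, the matrices $q,u\in\mathbb{R}^{N\times N}$ generated by the two-dimensional first-order $\Sigma\Delta$ recursion with alphabet $\mathcal{A}$ satisfy: (i) $\|u\|_{\max}\leq C$ with $C=\frac{b-a}{2(2^d-3)}$; (ii) $u_{i,j}=u_{i,j-1}+u_{i-1,j}-u_{i-1,j-1}+y_{i,j}-q_{i,j}$ for all $i,j$ (with $u_{i,0}=u_{0,j}=u_{0,0}=0$), i.e. $DuD^T=y-q$; (iii) each $q_{i,j}$ depends only on $\{y_{i',j'}: i'\leq i,\ j'\leq j\}$.
   Context: For a finite alphabet $\mathcal{A}\subset\mathbb{R}$, $Q_{\mathcal{A}}(z)$ denotes an element of $\mathcal{A}$ nearest to $z$. The two-dimensional first-order $\Sigma\Delta$ recursion: given $y\in\mathbb{R}^{N\times N}$, set $u_{i,0}=u_{0,j}=u_{0,0}=0$ and for $i,j\ge 1$ (in an order such that all indices $(i',j')$ with $i'\le i$, $j'\le j$, $(i',j')\neq(i,j)$ are computed first) define $q_{i,j}=Q_{\mathcal{A}}(u_{i,j-1}+u_{i-1,j}-u_{i-1,j-1}+y_{i,j})$ and $u_{i,j}=u_{i,j-1}+u_{i-1,j}-u_{i-1,j-1}+y_{i,j}-q_{i,j}$ (for the first row and column this reduces to the one-dimensional first-order scheme). $D$ is the $N\times N$ matrix with $1$ on the diagonal, $-1$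 on the subdiagonal and $0$ elsewhere. $\|u\|_{\max}=\max_{i,j}|u_{i,j}|$. *)

theory Defs
  imports Complex_Main
begin

definition nearest_quantizer :: "real set \<Rightarrow> (real \<Rightarrow> real) \<Rightarrow> bool" where
  "nearest_quantizer A Q \<longleftrightarrow> (\<forall>z. Q z \<in> A \<and> (\<forall>x\<in>A. \<bar>z - Q z\<bar> \<le> \<bar>z - x\<bar>))"

text \<open>Two-dimensional first-order Sigma-Delta recursion. Matrices are indexed
  from 1; the state u has u(i,0) = u(0,j) = 0.\<close>
fun sd_u :: "(real \<Rightarrow> real) \<Rightarrow> (nat \<Rightarrow> nat \<Rightarrow> real) \<Rightarrow> nat \<Rightarrow> nat \<Rightarrow> real" where
  "sd_u Q y 0 j = 0"
| "sd_u Q y (Suc i) 0 = 0"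
| "sd_u Q y (Suc i) (Suc j) =
     (let w = sd_u Q y (Suc i) j + sd_u Q y i (Suc j) - sd_u Q y i j + y (Suc i) (Suc j)
      in w - Q w)"

definition sd_q :: "(real \<Rightarrow> real) \<Rightarrow> (nat \<Rightarrow> nat \<Rightarrow> real) \<Rightarrow> nat \<Rightarrow> nat \<Rightarrow> real" where
  "sd_q Q y i j = Q (sd_u Q y i (j - 1) + sd_u Q y (i - 1) j - sd_u Q y (i - 1) (j - 1) + y i j)"

end

theory Submission
  imports Defs
begin

text \<open>Take for the alphabet the \<open>2^d\<close> equispaced points \<open>a - 2C + 2Ck\<close>, \<open>k < 2^d\<close>, with
  \<open>C = (b - a) / (2 (2^d - 3))\<close>. They have mesh \<open>2C\<close> and cover \<open>[a - 3C, b + 3C]\<close> in the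
  sense that every point of this interval lies within \<open>C\<close> of the alphabet. If the three
  states \<open>u\<^sub>i\<^sub>,\<^sub>j\<^sub>-\<^sub>1, u\<^sub>i\<^sub>-\<^sub>1\<^sub>,\<^sub>j, u\<^sub>i\<^sub>-\<^sub>1\<^sub>,\<^sub>j\<^sub>-\<^sub>1\<close> are bounded by \<open>C\<close> and \<open>y\<^sub>i\<^sub>,\<^sub>j \<in> [a, b]\<close>, the quantizer
  input therefore lies in \<open>[a - 3C, b + 3C]\<close>, and the new state, being the quantization
  error, is again bounded by \<open>C\<close>. Causality holds because the recursion for \<open>u\<^sub>i\<^sub>,\<^sub>j\<close>
  only reaches indices in the rectangle below \<open>(i, j)\<close>.\<close>

definition grid :: "real \<Rightarrow> real \<Rightarrow> nat \<Rightarrow> real set" where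
  "grid c h K = (\<lambda>k. c + h * real k) ` {..<K}"

lemma finite_grid: "finite (grid c h K)"
  by (simp add: grid_def)

lemma card_grid: "h \<noteq> 0 \<Longrightarrow> card (grid c h K) = K"
  by (simp add: grid_def card_image inj_on_def)

lemma grid_covers:
  fixes c h w :: real and K :: nat
  assumes h: "h > 0" and K: "K \<ge> 1"
    and lower: "c - h / 2 \<le> w" and upper: "w \<le> c + h * (real K - 1 / 2)"
  shows "\<exists>x \<in> grid c h K. \<bar>w - x\<bar> \<le> h / 2"
proof -
  define t where "t = (w - c) / h"
  define k where "k = min (K - 1) (nat \<lfloor>t + 1 / 2\<rfloor>)"
  have t_range: "- 1 / 2 \<le> t" "t \<le> real K - 1 / 2"
    using h lower upper by (simp_all add: t_def field_simps)
  have "\<bar>t - real k\<bar> \<le> 1 / 2"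
  proof (cases "nat \<lfloor>t + 1 / 2\<rfloor> \<le> K - 1")
    case True
    then have "real k = of_int \<lfloor>t + 1 / 2\<rfloor>"
      using t_range by (simp add: k_def)
    then show ?thesis by linarith
  next
    case False
    then have "real k = real K - 1" "t = real K - 1 / 2"
      using K t_range by (auto simp: k_def of_nat_diff) linarith
    then show ?thesis by simp
  qed
  then have "\<bar>w - (c + h * real k)\<bar> \<le> h / 2"
    using h by (simp add: t_def field_simps abs_le_iff)
  moreover have "c + h * real k \<in> grid c h K"
    unfolding grid_def using K by (intro imageI) (simp add: k_def)
  ultimately show ?thesis by blast
qed

lemma nearest_quantizer_error_le:
  assumes "nearest_quantizer A Q" "x \<in> A" "\<bar>z - x\<bar> \<le> r"
  shows "\<bar>z - Q z\<bar> \<le> r"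
proof -
  have "\<bar>z - Q z\<bar> \<le> \<bar>z - x\<bar>"
    using assms(1,2) unfolding nearest_quantizer_def by blast
  with assms(3) show ?thesis by linarith
qed

lemma sd_u_recurrence:
  assumes "1 \<le> i" "1 \<le> j"
  shows "sd_u Q y i j = sd_u Q y i (j - 1) + sd_u Q y (i - 1) j - sd_u Q y (i - 1) (j - 1)
                        + y i j - sd_q Q y i j"
proof -
  obtain i' j' where "i = Suc i'" "j = Suc j'"
    using assms by (metis Suc_le_D One_nat_def)
  then show ?thesis by (simp add: sd_q_def Let_def)
qed

lemma sd_u_depends_on_rectangle:
  assumes "\<forall>i' j'. 1 \<le> i' \<and> i' \<le> i \<and> 1 \<le> j' \<and> j' \<le> j \<longrightarrow> y' i' j' = y i' j'"
  shows "sd_u Q y' i j = sd_u Q y i j"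
  using assms
proof (induction Q y i j rule: sd_u.induct)
  case (3 Q y i j)
  have "sd_u Q y' (Suc i) j = sd_u Q y (Suc i) j"
    "sd_u Q y' i (Suc j) = sd_u Q y i (Suc j)"
    "sd_u Q y' i j = sd_u Q y i j"
    using 3 by (intro 3(1-3); auto)+
  moreover have "y' (Suc i) (Suc j) = y (Suc i) (Suc j)"
    using 3(4) by auto
  ultimately show ?case by (simp add: Let_def)
qed auto

lemma sd_q_depends_on_rectangle:
  assumes "1 \<le> i" "1 \<le> j"
    and "\<forall>i' j'. 1 \<le> i' \<and> i' \<le> i \<and> 1 \<le> j' \<and> j' \<le> j \<longrightarrow> y' i' j' = y i' j'"
  shows "sd_q Q y' i j = sd_q Q y i j"
proof -
  have "sd_u Q y' i' j' = sd_u Q y i' j'" if "i' \<le> i" "j' \<le> j" for i' j'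
    using assms(3) that by (intro sd_u_depends_on_rectangle) auto
  moreover have "y' i j = y i j"
    using assms by auto
  ultimately show ?thesis by (simp add: sd_q_def)
qed

lemma sd_u_abs_le:
  assumes quantizer_error: "\<And>w. a - 3 * C \<le> w \<Longrightarrow> w \<le> b + 3 * C \<Longrightarrow> \<bar>w - Q w\<bar> \<le> C"
    and "C \<ge> 0"
    and y: "\<forall>i j. 1 \<le> i \<and> i \<le> N \<and> 1 \<le> j \<and> j \<le> N \<longrightarrow> y i j \<in> {a..b}"
  shows "i \<le> N \<Longrightarrow> j \<le> N \<Longrightarrow> \<bar>sd_u Q y i j\<bar> \<le> C"
proof (induction i arbitrary: j)
  case (Suc i)
  note previous_row = Suc.IH and row_le = Suc.prems(1)
  show ?case using Suc.prems(2)
  proof (induction j)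
    case (Suc j)
    define w where "w = sd_u Q y (Suc i) j + sd_u Q y i (Suc j) - sd_u Q y i j + y (Suc i) (Suc j)"
    have "\<bar>sd_u Q y (Suc i) j\<bar> \<le> C" "\<bar>sd_u Q y i (Suc j)\<bar> \<le> C" "\<bar>sd_u Q y i j\<bar> \<le> C"
      using Suc.IH Suc.prems previous_row row_le by simp_all
    moreover have "y (Suc i) (Suc j) \<in> {a..b}"
      using y Suc.prems row_le by auto
    ultimately have "\<bar>w - Q w\<bar> \<le> C"
      unfolding w_def by (intro quantizer_error) auto
    then show ?case
      by (simp add: w_def[symmetric] Let_def)
  qed (use \<open>C \<ge> 0\<close> in simp)
qed (use \<open>C \<ge> 0\<close> in simp)

theorem proposition1:
  fixes a b :: real and d :: nat
  assumes "a < b" and "d \<ge> 2"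
  shows "\<exists>A :: real set. finite A \<and> card A = 2 ^ d \<and>
    (\<forall>Q. nearest_quantizer A Q \<longrightarrow>
      (\<forall>(N::nat) (y :: nat \<Rightarrow> nat \<Rightarrow> real).
         (\<forall>i j. 1 \<le> i \<and> i \<le> N \<and> 1 \<le> j \<and> j \<le> N \<longrightarrow> y i j \<in> {a..b}) \<longrightarrow>
         (\<forall>i j. i \<le> N \<and> j \<le> N \<longrightarrow>
            \<bar>sd_u Q y i j\<bar> \<le> (b - a) / (2 * (2 ^ d - 3))) \<and>
         (\<forall>i j. 1 \<le> i \<and> i \<le> N \<and> 1 \<le> j \<and> j \<le> N \<longrightarrow>
            sd_u Q y i j = sd_u Q y i (j - 1) + sd_u Q y (i - 1) j - sd_u Q y (i - 1) (j - 1)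
                           + y i j - sd_q Q y i j) \<and>
         (\<forall>i j. 1 \<le> i \<and> i \<le> N \<and> 1 \<le> j \<and> j \<le> N \<longrightarrow>
            (\<forall>y' :: nat \<Rightarrow> nat \<Rightarrow> real.
               (\<forall>i' j'. 1 \<le> i' \<and> i' \<le> i \<and> 1 \<le> j' \<and> j' \<le> j \<longrightarrow> y' i' j' = y i' j') \<longrightarrow>
               sd_q Q y' i j = sd_q Q y i j))))"
proof -
  define C :: real where "C = (b - a) / (2 * (2 ^ d - 3))"
  have "(2::real) ^ 2 \<le> 2 ^ d"
    using assms(2) by (intro power_increasing) auto
  then have C_pos: "C > 0" and b_eq: "b = a + 2 * C * (2 ^ d - 3)"
    using assms(1) by (simp_all add: C_def field_simps)
  define A where "A = grid (a - 2 * C) (2 * C) (2 ^ d)"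
  have quantizer_error: "\<bar>w - Q w\<bar> \<le> C"
    if "nearest_quantizer A Q" "a - 3 * C \<le> w" "w \<le> b + 3 * C" for Q w
    using grid_covers[of "2 * C" "2 ^ d" "a - 2 * C" w] that C_pos b_eq
    by (auto simp: A_def algebra_simps intro: nearest_quantizer_error_le)
  show ?thesis
  proof (intro exI[of _ A] conjI allI impI)
    show "finite A" "card A = 2 ^ d"
      using C_pos by (simp_all add: A_def finite_grid card_grid)
  next
    fix Q and N i j :: nat and y :: "nat \<Rightarrow> nat \<Rightarrow> real"
    assume "nearest_quantizer A Q"
      and "\<forall>i j. 1 \<le> i \<and> i \<le> N \<and> 1 \<le> j \<and> j \<le> N \<longrightarrow> y i j \<in> {a..b}"
      and "i \<le> N \<and> j \<le> N"
    then show "\<bar>sd_u Q y i j\<bar> \<le> (b - a) / (2 * (2 ^ d - 3))"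
      unfolding C_def[symmetric] using C_pos
      by (intro sd_u_abs_le[where a = a and b = b and N = N]) (auto intro: quantizer_error)
  qed (blast intro: sd_u_recurrence sd_q_depends_on_rectangle)+
qed

end
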